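(* Every monogenic ring of prime characteristic is finitely separable: if $a$ is an element of a ring with $pa=0$ for a prime $p$, then $\mathbb{Z}\langle a\rangle$ is finitely separable.
   Context: Rings are associative and not necessarily unital. $\mathbb{Z}\langle a\rangle=\{g(a): g\in\mathbb{Z}[x],\ g(0)=0\}$ is the subring generated by $a$. A ring $R$ is finitely separable if for every $r\in R$ and every subring $A\subseteq R$ with $r\notin A$ there exist a finite ring $F$ and a homomorphism $\varphi:R\to F$ with $\varphi(r)\notin\varphi(A)$. *)

theory Defs
  imports Main "HOL-Computational_Algebra.Primes"
begin

text \<open>Rings are associative, not necessarily unital: the ambient type class is
  the Isabelle class ring (associative multiplication, abelian additive group, no 1).\<close>

definition natmul :: "nat \<Rightarrow> 'a::ab_group_add \<Rightarrow> 'a" where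
  "natmul n x = (\<Sum>i<n. x)"

definition intmul :: "int \<Rightarrow> 'a::ab_group_add \<Rightarrow> 'a" where
  "intmul k x = (if 0 \<le> k then natmul (nat k) x else - natmul (nat (- k)) x)"

text \<open>ppow x k = x^(k+1), positive powers (no unit needed).\<close>
fun ppow :: "'a::semigroup_mult \<Rightarrow> nat \<Rightarrow> 'a" where
  "ppow x 0 = x"
| "ppow x (Suc k) = x * ppow x k"

text \<open>Z<a> = { g(a) : g in Z[x], g(0)=0 }, with g = sum_{k=1}^{n} c_k x^k.\<close>
definition gen_subring :: "'a::ring \<Rightarrow> 'a set" where
  "gen_subring a = {(\<Sum>k<n. intmul (c k) (ppow a k)) | c n. True}"

definition is_subring :: "'a::ring set \<Rightarrow> bool" where
  "is_subring A \<longleftrightarrow> 0 \<in> A \<and> (\<forall>x\<in>A. \<forall>y\<in>A. x - y \<in> A \<and> x * y \<in> A)"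

text \<open>A finite (associative, not necessarily unital) ring, given concretely by a
  finite carrier C of natural numbers and operations on it.  Every finite ring is
  isomorphic to one of this form.\<close>
definition finite_ring ::
  "nat set \<Rightarrow> (nat \<Rightarrow> nat \<Rightarrow> nat) \<Rightarrow> (nat \<Rightarrow> nat \<Rightarrow> nat) \<Rightarrow> nat \<Rightarrow> (nat \<Rightarrow> nat) \<Rightarrow> bool"
  where
  "finite_ring C ad mu z ng \<longleftrightarrow> finite C \<and> z \<in> C \<and>
     (\<forall>x\<in>C. \<forall>y\<in>C. ad x y \<in> C \<and> mu x y \<in> C) \<and> (\<forall>x\<in>C. ng x \<in> C) \<and>
     (\<forall>x\<in>C. \<forall>y\<in>C. \<forall>w\<in>C. ad (ad x y) w = ad x (ad y w)) \<and>
     (\<forall>x\<in>C. \<forall>y\<in>C. ad x y = ad y x) \<and>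
     (\<forall>x\<in>C. ad z x = x) \<and> (\<forall>x\<in>C. ad (ng x) x = z) \<and>
     (\<forall>x\<in>C. \<forall>y\<in>C. \<forall>w\<in>C. mu (mu x y) w = mu x (mu y w)) \<and>
     (\<forall>x\<in>C. \<forall>y\<in>C. \<forall>w\<in>C. mu x (ad y w) = ad (mu x y) (mu x w)) \<and>
     (\<forall>x\<in>C. \<forall>y\<in>C. \<forall>w\<in>C. mu (ad x y) w = ad (mu x w) (mu y w))"

definition ring_hom_into ::
  "('a::ring \<Rightarrow> nat) \<Rightarrow> 'a set \<Rightarrow> nat set \<Rightarrow> (nat \<Rightarrow> nat \<Rightarrow> nat) \<Rightarrow> (nat \<Rightarrow> nat \<Rightarrow> nat) \<Rightarrow> bool"
  where
  "ring_hom_into \<phi> R C ad mu \<longleftrightarrow> \<phi> ` R \<subseteq> C \<and>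
     (\<forall>x\<in>R. \<forall>y\<in>R. \<phi> (x + y) = ad (\<phi> x) (\<phi> y) \<and> \<phi> (x * y) = mu (\<phi> x) (\<phi> y))"

definition finitely_separable :: "'a::ring set \<Rightarrow> bool" where
  "finitely_separable R \<longleftrightarrow>
     (\<forall>r\<in>R. \<forall>A. is_subring A \<and> A \<subseteq> R \<and> r \<notin> A \<longrightarrow>
        (\<exists>C ad mu z ng \<phi>. finite_ring C ad mu z ng \<and> ring_hom_into \<phi> R C ad mu \<and>
           \<phi> r \<notin> \<phi> ` A))"

end

theory Submission
  imports Defs "HOL-Computational_Algebra.Polynomial" "HOL-Library.FuncSet"
begin

text \<open>Let \<open>R = \<int>\<langle>a\<rangle>\<close>, a commutative ring with \<open>pR = 0\<close>, let \<open>A\<close> be a subring and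
  \<open>r \<in> R - A\<close>. Choose \<open>f \<noteq> 0\<close> in \<open>R\<close> with \<open>fA \<subseteq> A\<close> (an element of \<open>A\<close>, or \<open>a\<close> itself if
  \<open>A = 0\<close>), and by Zorn a maximal subgroup \<open>N \<supseteq> A\<close> with \<open>fN \<subseteq> N\<close> and \<open>r \<notin> N\<close>.
  Maximality forces every element of \<open>R/N\<close> to be killed by a polynomial in \<open>f\<close> that is nonzero
  mod \<open>p\<close>. As the highest monomial of \<open>f\<close> not divisible by \<open>p\<close> has a unit coefficient, \<open>R/N\<close> is
  generated as a module over the polynomials in \<open>f\<close> by finitely many powers of \<open>a\<close>, hence finite.
  Then \<open>f\<close> acts on the finite set \<open>R/N\<close>, so \<open>f\<^sup>i \<equiv> f\<^sup>j\<close> on \<open>R/N\<close> for some \<open>i < j\<close>; the ideal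
  \<open>(f\<^sup>j - f\<^sup>i)R \<subseteq> N\<close> has finite index by the same argument, and the finite ring \<open>R/(f\<^sup>j - f\<^sup>i)R\<close>
  separates \<open>r\<close> from \<open>A\<close>.\<close>

lemma natmul_0 [simp]: "natmul 0 x = 0"
  by (simp add: natmul_def)

lemma natmul_Suc: "natmul (Suc n) x = x + natmul n x"
  by (simp add: natmul_def add.commute)

lemma natmul_zero [simp]: "natmul n 0 = 0"
  by (simp add: natmul_def)

lemma natmul_add_nat: "natmul (m + n) x = natmul m x + natmul n x"
  by (induct m) (auto simp: natmul_Suc add.assoc)

lemma natmul_add: "natmul n (x + y) = natmul n x + natmul n y"
  by (simp add: natmul_def sum.distrib)

lemma natmul_mult_nat: "natmul (m * n) x = natmul m (natmul n x)"
  by (induct m) (auto simp: natmul_Suc natmul_add_nat natmul_add)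

lemma natmul_diff: "natmul n (x - y) = natmul n x - natmul n y"
  by (simp add: natmul_def sum_subtractf)

lemma natmul_mult_left: "natmul n (x * y) = natmul n x * (y::'a::ring)"
  by (simp add: natmul_def sum_distrib_right)

lemma natmul_mult_right: "natmul n (x * y) = x * natmul n (y::'a::ring)"
  by (simp add: natmul_def sum_distrib_left)

lemma intmul_of_nat [simp]: "intmul (int n) x = natmul n x"
  by (simp add: intmul_def)

lemma intmul_uminus_of_nat: "intmul (- int n) x = - natmul n x"
  by (simp add: intmul_def)

lemma intmul_diff_of_nat: "intmul (int m - int n) x = natmul m x - natmul n x"
proof (cases "n \<le> m")
  case True
  then have "natmul m x = natmul (m - n) x + natmul n x"
    by (metis le_add_diff_inverse2 natmul_add_nat)
  moreover have "int m - int n = int (m - n)"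
    using True by simp
  ultimately show ?thesis
    by (simp only: intmul_of_nat) simp
next
  case False
  then have "int m - int n = - int (n - m)"
    by simp
  then have "intmul (int m - int n) x = - natmul (n - m) x"
    by (simp only: intmul_uminus_of_nat)
  moreover have "natmul n x = natmul (n - m) x + natmul m x"
    using False by (metis le_add_diff_inverse2 natmul_add_nat nat_le_linear)
  ultimately show ?thesis
    by (simp only:) simp
qed

lemma int_diff_of_nat_cases: obtains m n where "k = int m - int n"
proof (cases "k \<ge> 0")
  case True
  then show ?thesis using that[of "nat k" 0] by simp
next
  case False
  then show ?thesis using that[of 0 "nat (- k)"] by simp
qed

lemma intmul_add_int: "intmul (k + l) x = intmul k x + intmul l x"
proof -
  obtain m1 n1 where k: "k = int m1 - int n1" by (rule int_diff_of_nat_cases)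
  obtain m2 n2 where l: "l = int m2 - int n2" by (rule int_diff_of_nat_cases)
  have "k + l = int (m1 + m2) - int (n1 + n2)"
    using k l by simp
  then have "intmul (k + l) x = natmul (m1 + m2) x - natmul (n1 + n2) x"
    by (simp only: intmul_diff_of_nat)
  then show ?thesis
    unfolding k l intmul_diff_of_nat by (simp add: natmul_add_nat)
qed

lemma intmul_mult_int: "intmul (k * l) x = intmul k (intmul l x)"
proof -
  obtain m1 n1 where k: "k = int m1 - int n1" by (rule int_diff_of_nat_cases)
  obtain m2 n2 where l: "l = int m2 - int n2" by (rule int_diff_of_nat_cases)
  have "k * l = int (m1 * m2 + n1 * n2) - int (m1 * n2 + n1 * m2)"
    unfolding k l by (simp add: algebra_simps)
  then have "intmul (k * l) x
      = (natmul (m1 * m2) x + natmul (n1 * n2) x) - (natmul (m1 * n2) x + natmul (n1 * m2) x)"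
    by (simp only: intmul_diff_of_nat natmul_add_nat)
  also have "\<dots> = natmul m1 (natmul m2 x - natmul n2 x) - natmul n1 (natmul m2 x - natmul n2 x)"
    by (simp only: natmul_diff natmul_mult_nat) (simp add: algebra_simps)
  finally show ?thesis
    unfolding k l by (simp only: intmul_diff_of_nat)
qed

lemma intmul_0 [simp]: "intmul 0 x = 0"
  by (simp add: intmul_def)

lemma intmul_1 [simp]: "intmul 1 x = x"
  by (simp add: intmul_def natmul_def)

lemma intmul_zero [simp]: "intmul k 0 = 0"
  by (simp add: intmul_def)

lemma intmul_uminus_int: "intmul (- k) x = - intmul k x"
  by (metis add.inverse_unique add.right_inverse intmul_0 intmul_add_int)

lemma intmul_diff_int: "intmul (k - l) x = intmul k x - intmul l x"
  by (simp only: diff_conv_add_uminus intmul_add_int intmul_uminus_int)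

lemma intmul_add: "intmul k (x + y) = intmul k x + intmul k y"
  by (simp add: intmul_def natmul_add)

lemma intmul_mult_left: "intmul k (x * y) = intmul k x * (y::'a::ring)"
  by (simp add: intmul_def natmul_mult_left)

lemma intmul_mult_right: "intmul k (x * y) = x * intmul k (y::'a::ring)"
  by (simp add: intmul_def natmul_mult_right)

definition add_subgroup :: "'a::ab_group_add set \<Rightarrow> bool" where
  "add_subgroup J \<longleftrightarrow> 0 \<in> J \<and> (\<forall>x\<in>J. \<forall>y\<in>J. x - y \<in> J)"

lemma add_subgroup_zero: "add_subgroup J \<Longrightarrow> 0 \<in> J"
  by (simp add: add_subgroup_def)

lemma add_subgroup_diff: "add_subgroup J \<Longrightarrow> x \<in> J \<Longrightarrow> y \<in> J \<Longrightarrow> x - y \<in> J"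
  by (simp add: add_subgroup_def)

lemma add_subgroup_uminus: "add_subgroup J \<Longrightarrow> x \<in> J \<Longrightarrow> - x \<in> J"
  by (metis add_subgroup_diff add_subgroup_zero diff_0)

lemma add_subgroup_add: "add_subgroup J \<Longrightarrow> x \<in> J \<Longrightarrow> y \<in> J \<Longrightarrow> x + y \<in> J"
  by (metis add_subgroup_diff add_subgroup_uminus diff_minus_eq_add)

lemma add_subgroup_natmul: "add_subgroup J \<Longrightarrow> x \<in> J \<Longrightarrow> natmul n x \<in> J"
  by (induct n) (auto simp: natmul_Suc add_subgroup_zero add_subgroup_add)

lemma add_subgroup_intmul: "add_subgroup J \<Longrightarrow> x \<in> J \<Longrightarrow> intmul k x \<in> J"
  by (simp add: intmul_def add_subgroup_natmul add_subgroup_uminus)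

lemma add_subgroup_sum: "add_subgroup J \<Longrightarrow> (\<And>i. i \<in> S \<Longrightarrow> g i \<in> J) \<Longrightarrow> sum g S \<in> J"
  by (induct S rule: infinite_finite_induct) (auto simp: add_subgroup_zero add_subgroup_add)

lemma add_subgroup_Union_chain:
  assumes "C \<noteq> {}" "\<And>X. X \<in> C \<Longrightarrow> add_subgroup X" "\<And>X Y. X \<in> C \<Longrightarrow> Y \<in> C \<Longrightarrow> X \<subseteq> Y \<or> Y \<subseteq> X"
  shows "add_subgroup (\<Union>C)"
  unfolding add_subgroup_def
proof (intro conjI ballI)
  show "0 \<in> \<Union>C" using assms(1,2) add_subgroup_zero by blast
next
  fix x y assume "x \<in> \<Union>C" "y \<in> \<Union>C"
  then obtain X Y where "X \<in> C" "Y \<in> C" "x \<in> X" "y \<in> Y" by blast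
  with assms(2)[of X] assms(2)[of Y] assms(3)[of X Y] show "x - y \<in> \<Union>C"
    by (meson UnionI add_subgroup_diff subsetD)
qed

lemma is_subring_iff: "is_subring R \<longleftrightarrow> add_subgroup R \<and> (\<forall>x\<in>R. \<forall>y\<in>R. x * y \<in> R)"
  by (auto simp: is_subring_def add_subgroup_def)

text \<open>The subgroup \<open>J + \<int>B\<close>; for finite \<open>B\<close> it is the subgroup generated by \<open>J \<union> B\<close>.\<close>

definition subgroup_plus_span :: "'a::ab_group_add set \<Rightarrow> 'a set \<Rightarrow> 'a set" where
  "subgroup_plus_span J B = {j + (\<Sum>b\<in>B. intmul (w b) b) | j w. j \<in> J}"

lemma add_subgroup_subgroup_plus_span:
  assumes "add_subgroup J"
  shows "add_subgroup (subgroup_plus_span J B)"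
  unfolding add_subgroup_def subgroup_plus_span_def
proof (intro conjI ballI)
  show "0 \<in> {j + (\<Sum>b\<in>B. intmul (w b) b) | j w. j \<in> J}"
    using add_subgroup_zero[OF assms] by (intro CollectI exI[of _ 0] exI[of _ "\<lambda>_. 0"]) simp
next
  fix x y assume "x \<in> {j + (\<Sum>b\<in>B. intmul (w b) b) | j w. j \<in> J}"
    "y \<in> {j + (\<Sum>b\<in>B. intmul (w b) b) | j w. j \<in> J}"
  then obtain j1 w1 j2 w2 where "j1 \<in> J" "j2 \<in> J"
    "x = j1 + (\<Sum>b\<in>B. intmul (w1 b) b)" "y = j2 + (\<Sum>b\<in>B. intmul (w2 b) b)"
    by blast
  then have "x - y = (j1 - j2) + (\<Sum>b\<in>B. intmul (w1 b - w2 b) b)"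
    by (simp add: intmul_diff_int sum_subtractf)
  then show "x - y \<in> {j + (\<Sum>b\<in>B. intmul (w b) b) | j w. j \<in> J}"
    using add_subgroup_diff[OF assms \<open>j1 \<in> J\<close> \<open>j2 \<in> J\<close>]
    by (intro CollectI exI[of _ "j1 - j2"] exI[of _ "\<lambda>b. w1 b - w2 b"]) simp
qed

lemma subset_subgroup_plus_span: "J \<subseteq> subgroup_plus_span J B"
proof
  fix x assume "x \<in> J"
  then show "x \<in> subgroup_plus_span J B"
    unfolding subgroup_plus_span_def by (intro CollectI exI[of _ x] exI[of _ "\<lambda>_. 0"]) simp
qed

lemma span_subset_subgroup_plus_span:
  assumes "add_subgroup J" "finite B"
  shows "B \<subseteq> subgroup_plus_span J B"
proof
  fix x assume x: "x \<in> B"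
  have "(\<Sum>b\<in>B. intmul (if b = x then 1 else 0) b) = x"
    using x assms(2) by (simp add: if_distrib[of "\<lambda>c. intmul c _"] sum.delta' cong: if_cong)
  then show "x \<in> subgroup_plus_span J B"
    unfolding subgroup_plus_span_def using add_subgroup_zero[OF assms(1)]
    by (intro CollectI exI[of _ 0] exI[of _ "\<lambda>b. if b = x then 1 else 0"]) simp
qed

lemma mult_subgroup_plus_span:
  fixes f :: "'a::ring"
  assumes S: "add_subgroup S" and J: "\<And>j. j \<in> J \<Longrightarrow> f * j \<in> S"
    and B: "\<And>b. b \<in> B \<Longrightarrow> f * b \<in> S" and x: "x \<in> subgroup_plus_span J B"
  shows "f * x \<in> S"
proof -
  obtain j w where "j \<in> J" and x: "x = j + (\<Sum>b\<in>B. intmul (w b) b)"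
    using x by (auto simp: subgroup_plus_span_def)
  then have "f * x = f * j + (\<Sum>b\<in>B. intmul (w b) (f * b))"
    by (simp add: distrib_left sum_distrib_left intmul_mult_right)
  then show ?thesis
    using \<open>j \<in> J\<close> J B by (auto intro!: add_subgroup_add add_subgroup_sum add_subgroup_intmul S)
qed

definition finite_index :: "'a::ab_group_add set \<Rightarrow> 'a set \<Rightarrow> bool" where
  "finite_index R J \<longleftrightarrow> (\<exists>F. finite F \<and> F \<subseteq> R \<and> (\<forall>x\<in>R. \<exists>y\<in>F. x - y \<in> J))"

lemma coset_eq_iff:
  assumes I: "add_subgroup I" and "y \<in> R"
  shows "{z\<in>R. x - z \<in> I} = {z\<in>R. y - z \<in> I} \<longleftrightarrow> x - y \<in> I"
proof
  assume "{z\<in>R. x - z \<in> I} = {z\<in>R. y - z \<in> I}"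
  moreover have "y \<in> {z\<in>R. y - z \<in> I}"
    using assms add_subgroup_zero[OF I] by simp
  ultimately show "x - y \<in> I"
    by blast
next
  assume xy: "x - y \<in> I"
  have "x - z \<in> I \<longleftrightarrow> y - z \<in> I" for z
  proof
    assume "x - z \<in> I"
    from add_subgroup_diff[OF I this xy] show "y - z \<in> I" by simp
  next
    assume "y - z \<in> I"
    from add_subgroup_add[OF I this xy] show "x - z \<in> I" by simp
  qed
  then show "{z\<in>R. x - z \<in> I} = {z\<in>R. y - z \<in> I}"
    by blast
qed

lemma quotient_map_to_nat:
  fixes R I :: "'a::ab_group_add set"
  assumes I: "add_subgroup I" "finite_index R I"
  obtains \<phi> :: "'a \<Rightarrow> nat"
  where "finite (\<phi> ` R)" "\<And>x y. x \<in> R \<Longrightarrow> y \<in> R \<Longrightarrow> \<phi> x = \<phi> y \<longleftrightarrow> x - y \<in> I"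
proof -
  define cls where "cls x = {z\<in>R. x - z \<in> I}" for x
  have cls_eq: "cls x = cls y \<longleftrightarrow> x - y \<in> I" if "y \<in> R" for x y
    unfolding cls_def using I(1) that by (rule coset_eq_iff)
  obtain F where F: "finite F" "F \<subseteq> R" "\<forall>x\<in>R. \<exists>y\<in>F. x - y \<in> I"
    using I(2) by (auto simp: finite_index_def)
  have "cls ` R \<subseteq> cls ` F"
  proof
    fix q assume "q \<in> cls ` R"
    then obtain x where "x \<in> R" "q = cls x" by blast
    moreover from this F obtain y where "y \<in> F" "x - y \<in> I" by blast
    moreover have "y \<in> R" using \<open>y \<in> F\<close> F(2) by blast
    ultimately have "q = cls y" using cls_eq[where x = x and y = y] by simp
    with \<open>y \<in> F\<close> show "q \<in> cls ` F" by blast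
  qed
  then have fin: "finite (cls ` R)"
    using F(1) finite_surj by blast
  then obtain h :: "'a set \<Rightarrow> nat" where h: "inj_on h (cls ` R)"
    using finite_imp_inj_to_nat_seg by blast
  show thesis
  proof (rule that[of "h \<circ> cls"])
    show "finite ((h \<circ> cls) ` R)"
      using finite_imageI[OF fin, of h] by (simp add: image_image)
    fix x y assume "x \<in> R" "y \<in> R"
    then have "h (cls x) = h (cls y) \<longleftrightarrow> cls x = cls y"
      by (intro inj_on_eq_iff[OF h]) auto
    also have "\<dots> \<longleftrightarrow> x - y \<in> I"
      by (rule cls_eq) fact
    finally show "(h \<circ> cls) x = (h \<circ> cls) y \<longleftrightarrow> x - y \<in> I"
      by simp
  qed
qed

section \<open>Finite quotient rings\<close>

definition is_ideal_of :: "'a::ring set \<Rightarrow> 'a set \<Rightarrow> bool" where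
  "is_ideal_of I R \<longleftrightarrow> add_subgroup I \<and> I \<subseteq> R \<and> (\<forall>x\<in>I. \<forall>s\<in>R. x * s \<in> I \<and> s * x \<in> I)"

lemma quotient_operations:
  fixes R I :: "'a::ring set" and \<phi> :: "'a \<Rightarrow> 'b"
  assumes R: "is_subring R" and I: "is_ideal_of I R"
    and ker: "\<And>x y. x \<in> R \<Longrightarrow> y \<in> R \<Longrightarrow> \<phi> x = \<phi> y \<longleftrightarrow> x - y \<in> I"
  obtains ad mu ng where
    "\<And>x y. x \<in> R \<Longrightarrow> y \<in> R \<Longrightarrow> ad (\<phi> x) (\<phi> y) = \<phi> (x + y)"
    "\<And>x y. x \<in> R \<Longrightarrow> y \<in> R \<Longrightarrow> mu (\<phi> x) (\<phi> y) = \<phi> (x * y)"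
    "\<And>x. x \<in> R \<Longrightarrow> ng (\<phi> x) = \<phi> (- x)"
proof -
  have RS: "add_subgroup R" and R_mult: "\<And>x y. x \<in> R \<Longrightarrow> y \<in> R \<Longrightarrow> x * y \<in> R"
    using R by (auto simp: is_subring_iff)
  have IS: "add_subgroup I" and I_mult: "\<And>x s. x \<in> I \<Longrightarrow> s \<in> R \<Longrightarrow> x * s \<in> I \<and> s * x \<in> I"
    using I by (auto simp: is_ideal_of_def)
  define rep where "rep u = (SOME x. x \<in> R \<and> \<phi> x = u)" for u
  have rep: "rep (\<phi> x) \<in> R" "rep (\<phi> x) - x \<in> I" if "x \<in> R" for x
  proof -
    have "rep (\<phi> x) \<in> R \<and> \<phi> (rep (\<phi> x)) = \<phi> x"
      unfolding rep_def by (rule someI[of _ x]) (use that in auto)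
    then show "rep (\<phi> x) \<in> R" "rep (\<phi> x) - x \<in> I" using ker that by auto
  qed
  have ker_I: "\<phi> x' = \<phi> x" if "x' \<in> R" "x \<in> R" "x' - x \<in> I" for x' x
    using ker that by blast
  show thesis
  proof
    fix x y assume x: "x \<in> R" and y: "y \<in> R"
    have "(rep (\<phi> x) + rep (\<phi> y)) - (x + y) = (rep (\<phi> x) - x) + (rep (\<phi> y) - y)"
      by simp
    also have "\<dots> \<in> I"
      using x y rep IS by (blast intro: add_subgroup_add)
    finally show "\<phi> (rep (\<phi> x) + rep (\<phi> y)) = \<phi> (x + y)"
      using x y rep RS by (blast intro: ker_I add_subgroup_add)
    have "rep (\<phi> x) * rep (\<phi> y) - x * y = (rep (\<phi> x) - x) * rep (\<phi> y) + x * (rep (\<phi> y) - y)"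
      by (simp add: algebra_simps)
    also have "\<dots> \<in> I"
      using x y rep IS I_mult by (blast intro: add_subgroup_add)
    finally show "\<phi> (rep (\<phi> x) * rep (\<phi> y)) = \<phi> (x * y)"
      using x y rep by (blast intro: ker_I R_mult)
  next
    fix x assume x: "x \<in> R"
    have "- rep (\<phi> x) - - x = - (rep (\<phi> x) - x)"
      by simp
    also have "\<dots> \<in> I"
      using x rep IS by (blast intro: add_subgroup_uminus)
    finally show "\<phi> (- rep (\<phi> x)) = \<phi> (- x)"
      using x rep RS by (blast intro: ker_I add_subgroup_uminus)
  qed
qed

lemma finite_quotient_ring:
  fixes R I :: "'a::ring set"
  assumes R: "is_subring R" and I: "is_ideal_of I R" "finite_index R I"
  obtains C ad mu z ng and \<phi> :: "'a \<Rightarrow> nat"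
  where "finite_ring C ad mu z ng" "ring_hom_into \<phi> R C ad mu"
    "\<And>x y. x \<in> R \<Longrightarrow> y \<in> R \<Longrightarrow> \<phi> x = \<phi> y \<longleftrightarrow> x - y \<in> I"
proof -
  have RS: "add_subgroup R" and R_mult: "\<And>x y. x \<in> R \<Longrightarrow> y \<in> R \<Longrightarrow> x * y \<in> R"
    using R by (auto simp: is_subring_iff)
  have R_add: "x + y \<in> R" if "x \<in> R" "y \<in> R" for x y
    using that RS by (rule add_subgroup_add[rotated])
  have R_uminus: "- x \<in> R" if "x \<in> R" for x
    using that RS by (rule add_subgroup_uminus[rotated])
  obtain \<phi> :: "'a \<Rightarrow> nat" where fin: "finite (\<phi> ` R)"
    and ker: "\<And>x y. x \<in> R \<Longrightarrow> y \<in> R \<Longrightarrow> \<phi> x = \<phi> y \<longleftrightarrow> x - y \<in> I"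
    using quotient_map_to_nat I by (auto simp: is_ideal_of_def)
  obtain ad mu ng where
    ad [simp]: "\<And>x y. x \<in> R \<Longrightarrow> y \<in> R \<Longrightarrow> ad (\<phi> x) (\<phi> y) = \<phi> (x + y)" and
    mu [simp]: "\<And>x y. x \<in> R \<Longrightarrow> y \<in> R \<Longrightarrow> mu (\<phi> x) (\<phi> y) = \<phi> (x * y)" and
    ng [simp]: "\<And>x. x \<in> R \<Longrightarrow> ng (\<phi> x) = \<phi> (- x)"
    using quotient_operations[OF R I(1) ker] by blast
  have "finite_ring (\<phi> ` R) ad mu (\<phi> 0) ng"
    unfolding finite_ring_def using fin add_subgroup_zero[OF RS]
    by (auto simp: R_add R_uminus R_mult add_ac mult.assoc distrib_left distrib_right)
  moreover have "ring_hom_into \<phi> R (\<phi> ` R) ad mu"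
    by (simp add: ring_hom_into_def)
  ultimately show thesis
    using that ker by blast
qed

lemma finitely_separable_if_separating_ideals:
  assumes R: "is_subring R"
    and sep: "\<And>r A. r \<in> R \<Longrightarrow> is_subring A \<Longrightarrow> A \<subseteq> R \<Longrightarrow> r \<notin> A \<Longrightarrow>
      \<exists>I. is_ideal_of I R \<and> finite_index R I \<and> (\<forall>x\<in>A. r - x \<notin> I)"
  shows "finitely_separable R"
  unfolding finitely_separable_def
proof (intro ballI allI impI)
  fix r A assume r: "r \<in> R" and A: "is_subring A \<and> A \<subseteq> R \<and> r \<notin> A"
  then obtain I where I: "is_ideal_of I R" "finite_index R I" and rI: "\<forall>x\<in>A. r - x \<notin> I"
    using sep by blast
  obtain C ad mu z ng and \<phi> :: "'a \<Rightarrow> nat" where "finite_ring C ad mu z ng" "ring_hom_into \<phi> R C ad mu"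
    and ker: "\<And>x y. x \<in> R \<Longrightarrow> y \<in> R \<Longrightarrow> \<phi> x = \<phi> y \<longleftrightarrow> x - y \<in> I"
    using finite_quotient_ring[OF R I] by blast
  moreover have "\<phi> r \<notin> \<phi> ` A"
    using ker r A rI by auto
  ultimately show "\<exists>C ad mu z ng \<phi>. finite_ring C ad mu z ng \<and> ring_hom_into \<phi> R C ad mu \<and> \<phi> r \<notin> \<phi> ` A"
    by blast
qed

section \<open>Maximal invariant subgroups avoiding an element\<close>

definition invariant_avoiding :: "'a::ring \<Rightarrow> 'a \<Rightarrow> 'a set \<Rightarrow> 'a set \<Rightarrow> bool" where
  "invariant_avoiding f r A N \<longleftrightarrow> add_subgroup N \<and> A \<subseteq> N \<and> (\<forall>x\<in>N. f * x \<in> N) \<and> r \<notin> N"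

lemma exists_maximal_invariant_avoiding:
  assumes "invariant_avoiding f r A A"
  obtains N where "invariant_avoiding f r A N"
    "\<And>X. invariant_avoiding f r A X \<Longrightarrow> N \<subseteq> X \<Longrightarrow> X = N"
proof -
  let ?F = "Collect (invariant_avoiding f r A)"
  have "\<forall>C\<in>chains ?F. \<exists>U\<in>?F. \<forall>X\<in>C. X \<subseteq> U"
  proof
    fix C assume C: "C \<in> chains ?F"
    show "\<exists>U\<in>?F. \<forall>X\<in>C. X \<subseteq> U"
    proof (cases "C = {}")
      case True
      then show ?thesis using assms by blast
    next
      case False
      have inv: "invariant_avoiding f r A X" if "X \<in> C" for X
        using C that by (auto simp: chains_def)
      have "add_subgroup (\<Union>C)"
      proof (rule add_subgroup_Union_chain[OF False])
        show "add_subgroup X" if "X \<in> C" for X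
          using inv[OF that] by (simp add: invariant_avoiding_def)
        show "X \<subseteq> Y \<or> Y \<subseteq> X" if "X \<in> C" "Y \<in> C" for X Y
          using C that by (auto simp: chains_def chain_subset_def)
      qed
      moreover obtain X where "X \<in> C"
        using False by blast
      ultimately have "invariant_avoiding f r A (\<Union>C)"
        using inv unfolding invariant_avoiding_def by blast
      then show ?thesis by blast
    qed
  qed
  then obtain N where "N \<in> ?F" "\<forall>X\<in>?F. N \<subseteq> X \<longrightarrow> X = N"
    by (rule Zorn_Lemma2[THEN bexE])
  then show thesis
    using that by blast
qed

section \<open>Polynomials in a ring element acting by left multiplication\<close>

definition poly_act :: "'a::ring \<Rightarrow> int poly \<Rightarrow> 'a \<Rightarrow> 'a" where
  "poly_act f h v = fold_coeffs (\<lambda>c w. intmul c v + f * w) h 0"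

lemma poly_act_0 [simp]: "poly_act f 0 v = 0"
  by (simp add: poly_act_def)

lemma poly_act_pCons: "poly_act f (pCons c h) v = intmul c v + f * poly_act f h v"
  by (cases "c = 0 \<and> h = 0") (auto simp: poly_act_def)

lemma poly_act_add: "poly_act f (h1 + h2) v = poly_act f h1 v + poly_act f h2 v"
  by (induct h1 h2 rule: poly_induct2) (simp_all add: poly_act_pCons intmul_add_int algebra_simps)

lemma poly_act_minus: "poly_act f (- h) v = - poly_act f h v"
  by (induct h rule: pCons_induct) (auto simp: poly_act_pCons intmul_uminus_int)

lemma poly_act_diff: "poly_act f (h1 - h2) v = poly_act f h1 v - poly_act f h2 v"
  by (simp only: diff_conv_add_uminus poly_act_add poly_act_minus)

lemma poly_act_smult: "poly_act f (smult c h) v = intmul c (poly_act f h v)"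
  by (induct h rule: pCons_induct) (auto simp: poly_act_pCons intmul_add intmul_mult_right intmul_mult_int)

lemma poly_act_eq_sum:
  "degree h < n \<Longrightarrow> poly_act f h v = (\<Sum>k<n. intmul (coeff h k) (((*) f ^^ k) v))"
proof (induct h arbitrary: n rule: pCons_induct)
  case 0
  then show ?case by simp
next
  case (pCons c h)
  show ?case
  proof (cases "h = 0")
    case True
    then have "(\<Sum>k<n. intmul (coeff (pCons c h) k) (((*) f ^^ k) v))
        = (\<Sum>k<n. if k = 0 then intmul c v else 0)"
      by (intro sum.cong) (auto simp: coeff_pCons split: nat.splits)
    with True pCons.prems show ?thesis
      by (simp add: poly_act_pCons)
  next
    case False
    then obtain n' where n: "n = Suc n'" and deg: "degree h < n'"
      using pCons.prems by (cases n) auto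
    have "(\<Sum>k<n. intmul (coeff (pCons c h) k) (((*) f ^^ k) v))
        = intmul c v + f * (\<Sum>k<n'. intmul (coeff h k) (((*) f ^^ k) v))"
      unfolding n sum.lessThan_Suc_shift by (simp add: sum_distrib_left intmul_mult_right)
    then show ?thesis
      using pCons.hyps(2)[OF deg] by (simp add: poly_act_pCons)
  qed
qed

lemma invariant_avoiding_extend:
  assumes N: "invariant_avoiding f r A N"
    and r: "r \<notin> {x + poly_act f (monom 1 k * g) u | x g. x \<in> N}"
  shows "invariant_avoiding f r A {x + poly_act f (monom 1 k * g) u | x g. x \<in> N}"
    and "N \<subseteq> {x + poly_act f (monom 1 k * g) u | x g. x \<in> N}"
proof -
  let ?M = "{x + poly_act f (monom 1 k * g) u | x g. x \<in> N}"
  have NS: "add_subgroup N" and Nf: "\<And>x. x \<in> N \<Longrightarrow> f * x \<in> N" and AN: "A \<subseteq> N"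
    using N by (auto simp: invariant_avoiding_def)
  show NM: "N \<subseteq> ?M"
  proof
    fix x assume "x \<in> N"
    then show "x \<in> ?M" by (intro CollectI exI[of _ x] exI[of _ 0]) simp
  qed
  have "add_subgroup ?M"
    unfolding add_subgroup_def
  proof (intro conjI ballI)
    show "0 \<in> ?M" using NM add_subgroup_zero[OF NS] by blast
  next
    fix y z assume "y \<in> ?M" "z \<in> ?M"
    then obtain x1 g1 x2 g2 where "x1 \<in> N" "x2 \<in> N"
      "y = x1 + poly_act f (monom 1 k * g1) u" "z = x2 + poly_act f (monom 1 k * g2) u"
      by blast
    then have "y - z = (x1 - x2) + poly_act f (monom 1 k * (g1 - g2)) u"
      by (simp add: right_diff_distrib poly_act_diff)
    then show "y - z \<in> ?M"
      using add_subgroup_diff[OF NS \<open>x1 \<in> N\<close> \<open>x2 \<in> N\<close>] by blast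
  qed
  moreover have "f * y \<in> ?M" if "y \<in> ?M" for y
  proof -
    obtain x g where "x \<in> N" "y = x + poly_act f (monom 1 k * g) u"
      using \<open>y \<in> ?M\<close> by blast
    moreover have "monom 1 k * pCons 0 g = pCons 0 (monom 1 k * g)"
      by simp
    ultimately have "f * y = f * x + poly_act f (monom 1 k * pCons 0 g) u"
      by (simp add: distrib_left poly_act_pCons)
    then show ?thesis
      using Nf[OF \<open>x \<in> N\<close>] by blast
  qed
  ultimately show "invariant_avoiding f r A ?M"
    using AN NM r by (auto simp: invariant_avoiding_def)
qed

lemma funpow_mult_closed: "(\<And>x. x \<in> S \<Longrightarrow> f * x \<in> S) \<Longrightarrow> x \<in> S \<Longrightarrow> ((*) f ^^ k) x \<in> S"
  by (induct k) auto

lemma funpow_mult_zero [simp]: "((*) (f::'a::ring) ^^ k) 0 = 0"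
  by (induct k) auto

lemma funpow_mult_diff: "((*) (f::'a::ring) ^^ k) (x - y) = ((*) f ^^ k) x - ((*) f ^^ k) y"
  by (induct k) (auto simp: right_diff_distrib)

lemma funpow_mult_assoc: "((*) (f::'a::ring) ^^ k) u * s = ((*) f ^^ k) (u * s)"
  by (induct k) (auto simp: mult.assoc)

definition monic_relation_mod :: "'a::ring \<Rightarrow> 'a set \<Rightarrow> 'a \<Rightarrow> bool" where
  "monic_relation_mod f J u \<longleftrightarrow>
     (\<exists>D e. ((*) f ^^ D) u - (\<Sum>k<D. intmul (e k) (((*) f ^^ k) u)) \<in> J)"

lemma monic_relation_mod_periodic:
  assumes "i < j" "((*) f ^^ j) u - ((*) f ^^ i) u \<in> J"
  shows "monic_relation_mod f J u"
proof -
  have "(\<Sum>l<j. intmul (if l = i then 1 else 0) (((*) f ^^ l) u)) = ((*) f ^^ i) u"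
    using assms(1) by (simp add: if_distrib[of "\<lambda>c. intmul c _"] cong: if_cong)
  with assms(2) show ?thesis
    unfolding monic_relation_mod_def by (intro exI[of _ j] exI[of _ "\<lambda>l. if l = i then 1 else 0"]) simp
qed

text \<open>Pigeonhole: \<open>f\<close> induces one of finitely many maps on the cosets of \<open>N\<close>.\<close>

lemma eventually_periodic_mod:
  fixes f :: "'a::ring"
  assumes "finite_index R N" "add_subgroup N" "\<And>x. x \<in> N \<Longrightarrow> f * x \<in> N"
    and fR: "\<And>x. x \<in> R \<Longrightarrow> f * x \<in> R"
  obtains i j where "i < j" "\<And>u. u \<in> R \<Longrightarrow> ((*) f ^^ j) u - ((*) f ^^ i) u \<in> N"
proof -
  obtain F where F: "finite F" "F \<subseteq> R" "\<forall>x\<in>R. \<exists>y\<in>F. x - y \<in> N"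
    using assms(1) by (auto simp: finite_index_def)
  define rep where "rep x = (SOME y. y \<in> F \<and> x - y \<in> N)" for x
  have rep: "rep x \<in> F \<and> x - rep x \<in> N" if "x \<in> R" for x
    unfolding rep_def by (rule someI_ex) (use F that in blast)
  define \<Psi> where "\<Psi> k = restrict (\<lambda>y. rep (((*) f ^^ k) y)) F" for k
  have "range \<Psi> \<subseteq> F \<rightarrow>\<^sub>E F"
    using rep F(2) funpow_mult_closed[of R f, OF fR] by (auto simp: \<Psi>_def)
  then have "\<not> inj \<Psi>"
    by (metis F(1) finite_PiE finite_subset range_inj_infinite)
  then obtain i j where "i < j" "\<Psi> i = \<Psi> j"
    unfolding inj_def by (metis linorder_neqE_nat)
  then have same_rep: "rep (((*) f ^^ i) y) = rep (((*) f ^^ j) y)" if "y \<in> F" for y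
    using that by (metis \<Psi>_def restrict_apply')
  show thesis
  proof (rule that[OF \<open>i < j\<close>])
    fix u assume "u \<in> R"
    then obtain y where "y \<in> F" "u - y \<in> N" using F by blast
    then have "((*) f ^^ j) u - ((*) f ^^ i) u
        = (((*) f ^^ j) y - rep (((*) f ^^ j) y)) - (((*) f ^^ i) y - rep (((*) f ^^ i) y))
          + (((*) f ^^ j) (u - y) - ((*) f ^^ i) (u - y))"
      by (simp add: funpow_mult_diff same_rep)
    moreover have "((*) f ^^ k) y - rep (((*) f ^^ k) y) \<in> N" for k
      using rep funpow_mult_closed[of R f, OF fR] \<open>y \<in> F\<close> F(2) by blast
    moreover have "((*) f ^^ k) (u - y) \<in> N" for k
      using funpow_mult_closed[of N f] assms(3) \<open>u - y \<in> N\<close> by blast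
    ultimately show "((*) f ^^ j) u - ((*) f ^^ i) u \<in> N"
      using assms(2) by (metis add_subgroup_add add_subgroup_diff)
  qed
qed

declare ppow.simps(2) [simp del]

lemma ppow_mult: "ppow a i * ppow a j = ppow a (i + j + 1)"
  by (induct i) (auto simp: mult.assoc ppow.simps(2))

lemma intmul_ppow_mult:
  "intmul c (ppow a i) * intmul d (ppow a j) = intmul (c * d) (ppow (a::'a::ring) (i + j + 1))"
  by (simp add: intmul_mult_left[symmetric] intmul_mult_right[symmetric] ppow_mult intmul_mult_int[symmetric] mult.commute)

locale monogenic =
  fixes a :: "'a::ring"
begin

abbreviation R where "R \<equiv> gen_subring a"

lemma R_memI: "x = (\<Sum>k<n. intmul (c k) (ppow a k)) \<Longrightarrow> x \<in> R"
  unfolding gen_subring_def by blast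

lemma R_induct [consumes 1, case_names zero gen add]:
  assumes "x \<in> R" "P 0" "\<And>c k. P (intmul c (ppow a k))" "\<And>x y. P x \<Longrightarrow> P y \<Longrightarrow> P (x + y)"
  shows "P x"
proof -
  have "P (\<Sum>k<n. intmul (c k) (ppow a k))" for c n
    by (induct n) (auto simp: assms(2-4))
  then show ?thesis
    using assms(1) by (auto simp: gen_subring_def)
qed

lemma R_intmul_ppow: "intmul c (ppow a k) \<in> R"
proof (rule R_memI)
  show "intmul c (ppow a k) = (\<Sum>i<Suc k. intmul (if i = k then c else 0) (ppow a i))"
    by (simp add: if_distrib[of "\<lambda>c. intmul c _"] cong: if_cong)
qed

lemma R_ppow: "ppow a k \<in> R"
  using R_intmul_ppow[of 1 k] by simp

lemma R_zero: "0 \<in> R"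
  using R_intmul_ppow[of 0 0] by simp

lemma R_add:
  assumes "x \<in> R" "y \<in> R"
  shows "x + y \<in> R"
proof -
  obtain c n where x: "x = (\<Sum>k<n. intmul (c k) (ppow a k))"
    using assms(1) by (auto simp: gen_subring_def)
  obtain d m where y: "y = (\<Sum>k<m. intmul (d k) (ppow a k))"
    using assms(2) by (auto simp: gen_subring_def)
  define c' where "c' k = (if k < n then c k else 0)" for k
  define d' where "d' k = (if k < m then d k else 0)" for k
  have "x = (\<Sum>k<n + m. intmul (c' k) (ppow a k))"
    unfolding x c'_def by (rule sum.mono_neutral_cong_left) auto
  moreover have "y = (\<Sum>k<n + m. intmul (d' k) (ppow a k))"
    unfolding y d'_def by (rule sum.mono_neutral_cong_left) auto
  ultimately have "x + y = (\<Sum>k<n + m. intmul (c' k + d' k) (ppow a k))"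
    by (simp add: intmul_add_int sum.distrib)
  then show ?thesis
    by (rule R_memI)
qed

lemma R_intmul: "x \<in> R \<Longrightarrow> intmul c x \<in> R"
  by (induct rule: R_induct) (auto simp: R_zero R_add intmul_add intmul_mult_int[symmetric] R_intmul_ppow)

lemma add_subgroup_R: "add_subgroup R"
proof -
  have "x - y \<in> R" if "x \<in> R" "y \<in> R" for x y
    using R_add[OF that(1) R_intmul[OF that(2), of "-1"]] by (simp add: intmul_uminus_int)
  then show ?thesis
    by (simp add: add_subgroup_def R_zero)
qed

lemma R_mult:
  assumes "x \<in> R" "y \<in> R"
  shows "x * y \<in> R"
  using assms(1)
proof (induct rule: R_induct)
  case (gen c k)
  show ?case using assms(2)
    by (induct rule: R_induct) (auto simp: intmul_ppow_mult R_intmul_ppow distrib_left R_add R_zero)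
qed (auto simp: distrib_right R_add R_zero)

lemma R_mult_commute:
  assumes "x \<in> R" "y \<in> R"
  shows "x * y = y * x"
  using assms(1)
proof (induct rule: R_induct)
  case (gen c k)
  show ?case using assms(2)
    by (induct rule: R_induct) (auto simp: intmul_ppow_mult distrib_left distrib_right mult.commute add.commute)
qed (auto simp: distrib_left distrib_right)

lemma is_subring_R: "is_subring R"
  using add_subgroup_R R_mult by (simp add: is_subring_iff)

lemma funpow_mult_R: "f \<in> R \<Longrightarrow> v \<in> R \<Longrightarrow> ((*) f ^^ k) v \<in> R"
  by (rule funpow_mult_closed) (auto intro: R_mult)

lemma funpow_mult_commute:
  assumes "f \<in> R" "s \<in> R" "u \<in> R"
  shows "s * ((*) f ^^ k) u = ((*) f ^^ k) (s * u)"
proof (induct k)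
  case (Suc k)
  have "s * ((*) f ^^ Suc k) u = (s * f) * ((*) f ^^ k) u"
    by (simp add: mult.assoc)
  also have "\<dots> = f * (s * ((*) f ^^ k) u)"
    using R_mult_commute[OF assms(2,1)] by (simp add: mult.assoc)
  finally show ?case
    using Suc by simp
qed simp

lemma is_ideal_of_periodic_differences:
  assumes f: "f \<in> R"
  shows "is_ideal_of {((*) f ^^ j) u - ((*) f ^^ i) u | u. u \<in> R} R"
proof -
  let ?d = "\<lambda>u. ((*) f ^^ j) u - ((*) f ^^ i) u"
  have d_diff: "?d u - ?d v = ?d (u - v)" for u v
    by (simp add: funpow_mult_diff)
  have "add_subgroup {?d u | u. u \<in> R}"
    unfolding add_subgroup_def
  proof (intro conjI ballI)
    show "0 \<in> {?d u | u. u \<in> R}"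
      using R_zero by (intro CollectI exI[of _ 0]) simp
    show "x - y \<in> {?d u | u. u \<in> R}" if "x \<in> {?d u | u. u \<in> R}" "y \<in> {?d u | u. u \<in> R}" for x y
      using that d_diff add_subgroup_diff[OF add_subgroup_R] by blast
  qed
  moreover have "{?d u | u. u \<in> R} \<subseteq> R"
    using f by (auto intro!: add_subgroup_diff[OF add_subgroup_R] funpow_mult_R)
  moreover have "?d u * s = ?d (u * s)" "s * ?d u = ?d (s * u)" if "u \<in> R" "s \<in> R" for u s
    using that f by (simp_all add: left_diff_distrib right_diff_distrib funpow_mult_assoc funpow_mult_commute)
  ultimately show ?thesis
    unfolding is_ideal_of_def using R_mult by blast
qed

lemma exists_nonzero_multiplier:
  assumes A: "is_subring A" "A \<subseteq> R" and r: "r \<in> R" "r \<notin> A"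
  obtains f where "f \<in> R" "f \<noteq> 0" "\<forall>x\<in>A. f * x \<in> A"
proof (cases "A \<subseteq> {0}")
  case True
  have "a \<noteq> 0"
  proof
    assume "a = 0"
    then have "ppow a k = 0" for k
      by (induct k) (auto simp: ppow.simps(2))
    from r(1) have "r = 0"
      by (induct rule: R_induct) (auto simp: \<open>\<And>k. ppow a k = 0\<close>)
    with r(2) A(1) show False
      by (simp add: is_subring_def)
  qed
  moreover have "a \<in> R"
    using R_ppow[of 0] by simp
  moreover have "a * x \<in> A" if "x \<in> A" for x
    using that True A(1) by (auto simp: is_subring_def)
  ultimately show thesis
    using that by blast
next
  case False
  then obtain f where "f \<in> A" "f \<noteq> 0"
    by blast
  then show thesis
    using that A by (auto simp: is_subring_def)
qed

end

section \<open>Monogenic rings of prime characteristic\<close>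

locale char_p_monogenic = monogenic +
  fixes p :: nat
  assumes prime_p: "prime p" and natmul_p_a: "natmul p a = 0"
begin

lemma natmul_p_R: "x \<in> R \<Longrightarrow> natmul p x = 0"
proof (induct rule: R_induct)
  case (gen c k)
  have "natmul p (ppow a k) = 0"
    by (cases k) (auto simp: natmul_p_a natmul_mult_left ppow.simps(2))
  moreover have "natmul p (intmul c (ppow a k)) = intmul c (natmul p (ppow a k))"
    by (metis intmul_of_nat intmul_mult_int mult.commute)
  ultimately show ?case
    by simp
qed (auto simp: natmul_add)

lemma intmul_p_dvd:
  assumes "x \<in> R" "int p dvd k"
  shows "intmul k x = 0"
proof -
  obtain q where "k = int p * q"
    using assms(2) by (rule dvdE)
  then show ?thesis
    using natmul_p_R[OF R_intmul[OF assms(1)]] by (simp add: intmul_mult_int)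
qed

lemma intmul_mod_p: "x \<in> R \<Longrightarrow> intmul (k mod int p) x = intmul k x"
  by (metis add_0 div_mult_mod_eq dvd_triv_right intmul_add_int intmul_p_dvd)

lemma exists_intmul_inverse:
  assumes "\<not> int p dvd c"
  obtains e where "\<And>x. x \<in> R \<Longrightarrow> intmul e (intmul c x) = x"
proof -
  have "prime (int p)"
    using prime_p by simp
  then have "coprime c (int p)"
    using prime_imp_coprime assms coprime_commute by blast
  then obtain u v where uv: "u * c + v * int p = 1"
    using bezout_int[of c "int p"] by auto
  have "intmul u (intmul c x) = x" if "x \<in> R" for x
  proof -
    have "u * c = 1 - v * int p"
      using uv by simp
    then show ?thesis
      using that by (simp add: intmul_mult_int[symmetric] intmul_diff_int intmul_p_dvd)
  qed
  then show thesis
    by (rule that)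
qed

lemma poly_act_eq_0:
  assumes "f \<in> R" "v \<in> R" "\<forall>k. int p dvd coeff h k"
  shows "poly_act f h v = 0"
proof -
  have "poly_act f h v = (\<Sum>k<Suc (degree h). intmul (coeff h k) (((*) f ^^ k) v))"
    by (rule poly_act_eq_sum) simp
  also have "\<dots> = 0"
    using assms by (intro sum.neutral ballI intmul_p_dvd funpow_mult_R) auto
  finally show ?thesis .
qed

lemma unit_leading_form:
  assumes "f \<in> R" "f \<noteq> 0"
  obtains c m where "f = (\<Sum>k<Suc m. intmul (c k) (ppow a k))" "\<not> int p dvd c m"
proof -
  obtain c n where f: "f = (\<Sum>k<n. intmul (c k) (ppow a k))"
    using assms(1) by (auto simp: gen_subring_def)
  define P where "P = {k. k < n \<and> \<not> int p dvd c k}"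
  have "P \<noteq> {}"
  proof
    assume "P = {}"
    then have "f = 0"
      unfolding f P_def by (intro sum.neutral ballI intmul_p_dvd R_ppow) auto
    with assms(2) show False ..
  qed
  moreover have "finite P"
    by (simp add: P_def)
  ultimately have m: "Max P < n" "\<not> int p dvd c (Max P)"
    using Max_in[of P] by (auto simp: P_def)
  have above: "int p dvd c k" if "Max P < k" "k < n" for k
  proof (rule ccontr)
    assume "\<not> int p dvd c k"
    with that(2) have "k \<in> P" by (simp add: P_def)
    with Max_ge[OF \<open>finite P\<close>] that(1) show False by fastforce
  qed
  have "f = (\<Sum>k<Suc (Max P). intmul (c k) (ppow a k))"
    unfolding f using m(1) above
    by (intro sum.mono_neutral_right) (auto intro!: intmul_p_dvd R_ppow)
  then show thesis
    using m(2) by (rule that)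
qed

lemma R_subset_invariant_subgroup:
  assumes f: "f = (\<Sum>k<Suc m. intmul (c k) (ppow a k))" "\<not> int p dvd c m"
    and S: "add_subgroup S" "\<And>x. x \<in> S \<Longrightarrow> f * x \<in> S" and gens: "\<And>i. i \<le> m \<Longrightarrow> ppow a i \<in> S"
  shows "R \<subseteq> S"
proof -
  obtain e where e: "\<And>x. x \<in> R \<Longrightarrow> intmul e (intmul (c m) x) = x"
    using exists_intmul_inverse[OF f(2)] by blast
  have "ppow a K \<in> S" for K
  proof (induct K rule: less_induct)
    case (less K)
    show ?case
    proof (cases "K \<le> m")
      case True
      then show ?thesis by (rule gens)
    next
      case False
      define j where "j = K - m - 1"
      have K: "K = m + j + 1"
        using False by (simp add: j_def)
      let ?t = "\<lambda>k. intmul (c k) (ppow a (k + j + 1))"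
      \<comment> \<open>the top term of \<open>f a\<^sup>j\<^sup>+\<^sup>1\<close> is \<open>c\<^sub>m a\<^sup>K\<^sup>+\<^sup>1\<close>; the lower ones lie in \<open>S\<close>\<close>
      have "f * ppow a j = (\<Sum>k<Suc m. ?t k)"
        by (simp only: f sum_distrib_right intmul_mult_left[symmetric] ppow_mult)
      also have "\<dots> = (\<Sum>k<m. ?t k) + intmul (c m) (ppow a K)"
        by (simp add: K)
      finally have "f * ppow a j = (\<Sum>k<m. ?t k) + intmul (c m) (ppow a K)" .
      moreover have "f * ppow a j \<in> S"
        using less K by (intro S(2)) simp
      moreover have "(\<Sum>k<m. ?t k) \<in> S"
        using less K by (intro add_subgroup_sum[OF S(1)] add_subgroup_intmul[OF S(1)]) (auto simp del: ppow.simps)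
      ultimately have "intmul (c m) (ppow a K) \<in> S"
        using add_subgroup_diff[OF S(1)] by (metis add_diff_cancel_left')
      then show ?thesis
        using add_subgroup_intmul[OF S(1), of _ e] e[OF R_ppow] by metis
    qed
  qed
  then show ?thesis
    using S(1) by (auto elim!: R_induct intro: add_subgroup_zero add_subgroup_intmul add_subgroup_add)
qed

lemma finite_index_if_covered:
  assumes B: "finite B" "B \<subseteq> R" and R: "R \<subseteq> subgroup_plus_span J B"
  shows "finite_index R J"
proof -
  define F where "F = (\<lambda>w. \<Sum>b\<in>B. intmul (w b) b) ` (B \<rightarrow>\<^sub>E {0..<int p})"
  have "finite F"
    unfolding F_def using B(1) by (intro finite_imageI finite_PiE) auto
  moreover have "F \<subseteq> R"
    unfolding F_def using B(2) by (auto intro!: add_subgroup_sum[OF add_subgroup_R] R_intmul)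
  moreover have "\<exists>y\<in>F. x - y \<in> J" if "x \<in> R" for x
  proof -
    have "x \<in> subgroup_plus_span J B"
      using R that by blast
    then obtain j w where "j \<in> J" and x: "x = j + (\<Sum>b\<in>B. intmul (w b) b)"
      unfolding subgroup_plus_span_def by blast
    define w' where "w' = restrict (\<lambda>b. w b mod int p) B"
    have "w' \<in> B \<rightarrow>\<^sub>E {0..<int p}"
      using prime_gt_0_nat[OF prime_p] by (auto simp: w'_def)
    moreover have "(\<Sum>b\<in>B. intmul (w b) b) = (\<Sum>b\<in>B. intmul (w' b) b)"
      using B(2) by (intro sum.cong) (auto simp: w'_def intmul_mod_p)
    ultimately have "(\<Sum>b\<in>B. intmul (w b) b) \<in> F"
      unfolding F_def by (auto intro: image_eqI[where x = w'])
    moreover have "x - (\<Sum>b\<in>B. intmul (w b) b) = j"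
      by (simp add: x)
    ultimately show ?thesis
      using \<open>j \<in> J\<close> by metis
  qed
  ultimately show ?thesis
    unfolding finite_index_def by blast
qed

text \<open>\<open>R/J\<close> is spanned by the \<open>f\<close>-orbits of \<open>a, \<dots>, a\<^sup>m\<^sup>+\<^sup>1\<close>, and each orbit spans a
  finitely generated group modulo \<open>J\<close>.\<close>

lemma finite_index_if_monic_relations:
  assumes f: "f = (\<Sum>k<Suc m. intmul (c k) (ppow a k))" "\<not> int p dvd c m"
    and J: "add_subgroup J" "\<And>x. x \<in> J \<Longrightarrow> f * x \<in> J"
    and rel: "\<And>i. i \<le> m \<Longrightarrow> monic_relation_mod f J (ppow a i)"
  shows "finite_index R J"
proof -
  have fR: "f \<in> R"
    using f(1) by (rule R_memI)
  obtain D e where De: "\<And>i. i \<le> m \<Longrightarrow>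
      ((*) f ^^ D i) (ppow a i) - (\<Sum>k<D i. intmul (e i k) (((*) f ^^ k) (ppow a i))) \<in> J"
    using rel unfolding monic_relation_mod_def by metis
  define B where "B = (\<lambda>(i, k). ((*) f ^^ k) (ppow a i)) ` (SIGMA i:{..m}. {..<D i})"
  define S where "S = subgroup_plus_span J B"
  have B: "finite B" "B \<subseteq> R"
    unfolding B_def using funpow_mult_R[OF fR R_ppow] by auto
  have S: "add_subgroup S" "J \<subseteq> S" "B \<subseteq> S"
    unfolding S_def using J(1) B(1)
    by (simp_all add: add_subgroup_subgroup_plus_span subset_subgroup_plus_span span_subset_subgroup_plus_span)
  have orbit: "((*) f ^^ k) (ppow a i) \<in> S" if "i \<le> m" "k \<le> D i" for i k
  proof (cases "k < D i")
    case True
    then show ?thesis using that S(3) by (force simp: B_def)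
  next
    case False
    then have "k = D i" using that by simp
    moreover have "(\<Sum>k<D i. intmul (e i k) (((*) f ^^ k) (ppow a i))) \<in> S"
      using that S(1,3) by (intro add_subgroup_sum add_subgroup_intmul) (force simp: B_def)+
    ultimately show ?thesis
      using De[OF that(1)] S(1,2) by (metis add_subgroup_add diff_add_cancel subsetD)
  qed
  have "f * x \<in> S" if "x \<in> S" for x
  proof (rule mult_subgroup_plus_span[OF S(1)])
    show "f * j \<in> S" if "j \<in> J" for j
      using J(2) S(2) that by blast
    show "f * b \<in> S" if "b \<in> B" for b
      using that orbit[of _ "Suc _"] by (auto simp: B_def Suc_le_eq)
    show "x \<in> subgroup_plus_span J B"
      using \<open>x \<in> S\<close> by (simp add: S_def)
  qed
  moreover have "ppow a i \<in> S" if "i \<le> m" for i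
    using orbit[OF that, of 0] by simp
  ultimately have "R \<subseteq> S"
    by (intro R_subset_invariant_subgroup[OF f S(1)])
  then show ?thesis
    using B by (intro finite_index_if_covered) (simp_all add: S_def)
qed

text \<open>Multiplying \<open>g\<close> by an inverse mod \<open>p\<close> of its highest coefficient prime to \<open>p\<close> makes
  the relation monic.\<close>

lemma monic_relation_if_annihilated:
  assumes fR: "f \<in> R" and u: "u \<in> R" and N: "add_subgroup N"
    and g: "\<not> (\<forall>k. int p dvd coeff g k)" "poly_act f g u \<in> N"
  shows "monic_relation_mod f N u"
proof -
  define P where "P = {k. \<not> int p dvd coeff g k}"
  have "finite P"
    by (rule finite_subset[of _ "{..degree g}"]) (auto simp: P_def intro!: le_degree)
  moreover have "P \<noteq> {}"
    using g(1) by (simp add: P_def)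
  ultimately have D: "\<not> int p dvd coeff g (Max P)"
    using Max_in[of P] by (auto simp: P_def)
  have above: "int p dvd coeff g k" if "Max P < k" for k
  proof (rule ccontr)
    assume "\<not> int p dvd coeff g k"
    then have "k \<in> P" by (simp add: P_def)
    with Max_ge[OF \<open>finite P\<close>] that show False by fastforce
  qed
  define D where "D = Max P"
  obtain e where e: "\<And>x. x \<in> R \<Longrightarrow> intmul e (intmul (coeff g D) x) = x"
    using exists_intmul_inverse D by (metis D_def)
  let ?t = "\<lambda>k. intmul (coeff (smult e g) k) (((*) f ^^ k) u)"
  have "poly_act f (smult e g) u = (\<Sum>k<Suc (degree g). ?t k)"
    by (rule poly_act_eq_sum) (simp add: le_imp_less_Suc degree_smult_le)
  also have "\<dots> = (\<Sum>k<Suc D. ?t k)"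
  proof (rule sum.mono_neutral_right)
    show "\<forall>k\<in>{..<Suc (degree g)} - {..<Suc D}. ?t k = 0"
      using above fR u by (auto simp: D_def intro!: intmul_p_dvd funpow_mult_R dvd_mult)
  qed (use D in \<open>auto simp: D_def intro!: le_degree\<close>)
  also have "\<dots> = (\<Sum>k<D. ?t k) + ((*) f ^^ D) u"
    using e[OF funpow_mult_R[OF fR u]] by (simp add: intmul_mult_int)
  finally have "((*) f ^^ D) u - (\<Sum>k<D. intmul (- coeff (smult e g) k) (((*) f ^^ k) u))
      = poly_act f (smult e g) u"
    by (simp add: intmul_uminus_int sum_negf)
  moreover have "poly_act f (smult e g) u \<in> N"
    using g(2) N by (simp add: poly_act_smult add_subgroup_intmul)
  ultimately show ?thesis
    unfolding monic_relation_mod_def by metis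
qed

text \<open>If no nonzero polynomial in \<open>f\<close> sent \<open>u\<close> into \<open>N\<close>, adjoining \<open>f\<^sup>k\<int>[f]u\<close> would enlarge \<open>N\<close>
  for every \<open>k\<close>, so by maximality \<open>r \<in> N + f\<^sup>k\<int>[f]u\<close> for all \<open>k\<close>; comparing these
  representations shows that the one for \<open>k = 0\<close> has all coefficients divisible by \<open>p\<close>.\<close>

lemma exists_annihilator_mod_maximal:
  assumes fR: "f \<in> R" and u: "u \<in> R" and N: "invariant_avoiding f r A N"
    and max: "\<And>X. invariant_avoiding f r A X \<Longrightarrow> N \<subseteq> X \<Longrightarrow> X = N"
  shows "\<exists>g. \<not> (\<forall>k. int p dvd coeff g k) \<and> poly_act f g u \<in> N"
proof (rule ccontr)
  assume "\<nexists>g. \<not> (\<forall>k. int p dvd coeff g k) \<and> poly_act f g u \<in> N"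
  then have H: "int p dvd coeff g k" if "poly_act f g u \<in> N" for g k
    using that by blast
  have NS: "add_subgroup N" and rN: "r \<notin> N"
    using N by (auto simp: invariant_avoiding_def)
  have r_mem: "\<exists>x g. x \<in> N \<and> r = x + poly_act f (monom 1 k * g) u" for k
  proof (rule ccontr)
    let ?M = "{x + poly_act f (monom 1 k * g) u | x g. x \<in> N}"
    assume "\<not> (\<exists>x g. x \<in> N \<and> r = x + poly_act f (monom 1 k * g) u)"
    then have "r \<notin> ?M" by blast
    then have "?M = N"
      using max invariant_avoiding_extend[OF N] by blast
    moreover have "poly_act f (monom 1 k) u \<in> ?M"
      using add_subgroup_zero[OF NS] by (intro CollectI exI[of _ 0] exI[of _ 1]) simp
    ultimately have "int p dvd coeff (monom 1 k) k"
      using H by blast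
    then show False
      using prime_gt_1_nat[OF prime_p] by simp
  qed
  obtain x0 g0 where x0: "x0 \<in> N" "r = x0 + poly_act f g0 u"
    using r_mem[of 0] by auto
  have "int p dvd coeff g0 j" for j
  proof -
    obtain x1 g1 where x1: "x1 \<in> N" "r = x1 + poly_act f (monom 1 (Suc j) * g1) u"
      using r_mem by blast
    have "poly_act f (g0 - monom 1 (Suc j) * g1) u = x1 - x0"
      using x0 x1 by (simp add: poly_act_diff algebra_simps)
    then have "int p dvd coeff (g0 - monom 1 (Suc j) * g1) j"
      using H add_subgroup_diff[OF NS x1(1) x0(1)] by metis
    then show ?thesis
      by (simp add: coeff_monom_mult)
  qed
  then have "r = x0"
    using x0 poly_act_eq_0[OF fR u] by simp
  with x0(1) rN show False
    by simp
qed

lemma finite_index_if_maximal: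
  assumes f: "f = (\<Sum>k<Suc m. intmul (c k) (ppow a k))" "\<not> int p dvd c m"
    and N: "invariant_avoiding f r A N"
    and max: "\<And>X. invariant_avoiding f r A X \<Longrightarrow> N \<subseteq> X \<Longrightarrow> X = N"
  shows "finite_index R N"
proof -
  have fR: "f \<in> R"
    using f(1) by (rule R_memI)
  have NS: "add_subgroup N" and Nf: "\<And>x. x \<in> N \<Longrightarrow> f * x \<in> N"
    using N by (auto simp: invariant_avoiding_def)
  have "monic_relation_mod f N (ppow a i)" for i
  proof -
    obtain g where "\<not> (\<forall>k. int p dvd coeff g k)" "poly_act f g (ppow a i) \<in> N"
      using exists_annihilator_mod_maximal[OF fR R_ppow N max] by blast
    then show ?thesis
      by (rule monic_relation_if_annihilated[OF fR R_ppow NS])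
  qed
  then show ?thesis
    by (intro finite_index_if_monic_relations[OF f NS Nf])
qed

lemma separating_ideal:
  assumes f: "f = (\<Sum>k<Suc m. intmul (c k) (ppow a k))" "\<not> int p dvd c m"
    and A: "invariant_avoiding f r A A"
  shows "\<exists>I. is_ideal_of I R \<and> finite_index R I \<and> (\<forall>x\<in>A. r - x \<notin> I)"
proof -
  have fR: "f \<in> R"
    using f(1) by (rule R_memI)
  obtain N where N: "invariant_avoiding f r A N"
    and max: "\<And>X. invariant_avoiding f r A X \<Longrightarrow> N \<subseteq> X \<Longrightarrow> X = N"
    using exists_maximal_invariant_avoiding[OF A] by blast
  have NS: "add_subgroup N" and Nf: "\<And>x. x \<in> N \<Longrightarrow> f * x \<in> N" and AN: "A \<subseteq> N" and rN: "r \<notin> N"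
    using N by (auto simp: invariant_avoiding_def)
  obtain i j where "i < j" and ij: "\<And>u. u \<in> R \<Longrightarrow> ((*) f ^^ j) u - ((*) f ^^ i) u \<in> N"
    using eventually_periodic_mod[OF finite_index_if_maximal[OF f N max] NS Nf] fR R_mult by blast
  define I where "I = {((*) f ^^ j) u - ((*) f ^^ i) u | u. u \<in> R}"
  have I: "is_ideal_of I R"
    unfolding I_def by (rule is_ideal_of_periodic_differences[OF fR])
  then have IS: "add_subgroup I" and If: "\<And>x. x \<in> I \<Longrightarrow> f * x \<in> I"
    using fR by (auto simp: is_ideal_of_def R_mult_commute)
  have "monic_relation_mod f I (ppow a k)" for k
    using \<open>i < j\<close> R_ppow by (intro monic_relation_mod_periodic) (auto simp: I_def)
  then have "finite_index R I"
    by (intro finite_index_if_monic_relations[OF f IS If])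
  moreover have "r - x \<notin> I" if "x \<in> A" for x
    using ij that AN rN add_subgroup_add[OF NS, of "r - x" x] by (auto simp: I_def)
  ultimately show ?thesis
    using I by blast
qed

end

theorem mainTheorem15:
  fixes a :: "'a::ring" and p :: nat
  assumes "prime p" and "natmul p a = 0"
  shows "finitely_separable (gen_subring a)"
proof -
  interpret char_p_monogenic a p
    using assms by unfold_locales
  show ?thesis
  proof (rule finitely_separable_if_separating_ideals[OF is_subring_R])
    fix r A assume r: "r \<in> R" and A: "is_subring A" "A \<subseteq> R" "r \<notin> A"
    obtain f where "f \<in> R" "f \<noteq> 0" and fA: "\<forall>x\<in>A. f * x \<in> A"
      using exists_nonzero_multiplier[OF A(1,2) r A(3)] .
    obtain c m where f: "f = (\<Sum>k<Suc m. intmul (c k) (ppow a k))" "\<not> int p dvd c m"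
      using unit_leading_form[OF \<open>f \<in> R\<close> \<open>f \<noteq> 0\<close>] .
    have "invariant_avoiding f r A A"
      using A fA by (simp add: invariant_avoiding_def is_subring_iff)
    then show "\<exists>I. is_ideal_of I R \<and> finite_index R I \<and> (\<forall>x\<in>A. r - x \<notin> I)"
      by (rule separating_ideal[OF f])
  qed
qed

end
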